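(* Let $n\ge m\ge1$ and let $n_1,\dots,n_m$ be positive integers with $\sum_{k=1}^m n_k=n$. Then for every $t\in[0,1]$, $$\sum_{k=1}^m\sum_{i=0}^{n_k-1}\log\Bigl(1-t\frac{i}{n_k}\Bigr)-\sum_{i=0}^{n-1}\log\Bigl(1-t\frac{i}{n}\Bigr)\ge\frac{m-1}{2}\,t.$$ *)

theory Defs
  imports Complex_Main
begin

end

theory Submission
  imports Defs
begin

text \<open>
  Put \<open>h x = ln (1 - t x) + t x\<close>, which is decreasing on \<open>[0, 1)\<close>, and let \<open>G N\<close> be the
  sum of \<open>h\<close> over the grid \<open>{i / N | i < N}\<close>. The linear parts of these sums account for
  exactly \<open>(m - 1) t / 2\<close>, so it remains to show that \<open>G\<close> is subadditive. For two summands,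
  merge the grids of \<open>a\<close> and \<open>b\<close> into one sorted list of length \<open>a + b\<close>: its \<open>k\<close>-th entry is
  at most \<open>k / (a + b)\<close>, so it is compared termwise with the grid of \<open>a + b\<close>, using that \<open>h\<close>
  decreases.
\<close>

definition grid_sum :: "(real \<Rightarrow> real) \<Rightarrow> nat \<Rightarrow> real" where
  "grid_sum h N = (\<Sum>i<N. h (real i / real N))"

text \<open>
  Merging the grids \<open>{i / a | i < a}\<close> and \<open>{j / b | j < b}\<close> into one sorted list of length
  \<open>a + b\<close>, with ties placed left-grid first, puts \<open>i / a\<close> at position \<open>\<lceil>i (a + b) / a\<rceil>\<close>
  and \<open>j / b\<close> at position \<open>\<lfloor>j (a + b) / b\<rfloor> + 1\<close>.
\<close>

definition merge_rank_left :: "nat \<Rightarrow> nat \<Rightarrow> nat \<Rightarrow> nat" where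
  "merge_rank_left a b i = (i * (a + b) + a - 1) div a"

definition merge_rank_right :: "nat \<Rightarrow> nat \<Rightarrow> nat \<Rightarrow> nat" where
  "merge_rank_right a b j = j * (a + b) div b + 1"

lemma merge_rank_left_bounds:
  assumes "0 < a"
  shows "i * (a + b) \<le> merge_rank_left a b i * a"
    and "merge_rank_left a b i * a < i * (a + b) + a"
proof -
  let ?x = "i * (a + b) + a - 1"
  have "?x = merge_rank_left a b i * a + ?x mod a"
    by (simp add: merge_rank_left_def)
  moreover have "?x mod a < a"
    using assms by simp
  ultimately show "i * (a + b) \<le> merge_rank_left a b i * a"
    and "merge_rank_left a b i * a < i * (a + b) + a"
    using assms by linarith+
qed

lemma merge_rank_right_bounds:
  assumes "0 < b"
  shows "j * (a + b) < merge_rank_right a b j * b"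
    and "merge_rank_right a b j * b \<le> j * (a + b) + b"
proof -
  let ?x = "j * (a + b)"
  have "?x = (?x div b) * b + ?x mod b"
    by simp
  moreover have "?x mod b < b"
    using assms by simp
  moreover have "merge_rank_right a b j * b = (?x div b) * b + b"
    by (simp add: merge_rank_right_def)
  ultimately show "?x < merge_rank_right a b j * b"
    and "merge_rank_right a b j * b \<le> ?x + b"
    by linarith+
qed

lemma strict_mono_merge_rank_left:
  assumes "0 < a"
  shows "strict_mono (merge_rank_left a b)"
  unfolding strict_mono_Suc_iff
proof
  fix i
  have "merge_rank_left a b i * a < Suc i * (a + b)"
    using merge_rank_left_bounds(2)[OF assms, where b=b and i=i] by simp
  also have "\<dots> \<le> merge_rank_left a b (Suc i) * a"
    by (rule merge_rank_left_bounds(1)[OF assms])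
  finally show "merge_rank_left a b i < merge_rank_left a b (Suc i)"
    by simp
qed

lemma strict_mono_merge_rank_right:
  assumes "0 < b"
  shows "strict_mono (merge_rank_right a b)"
  unfolding strict_mono_Suc_iff
proof
  fix j
  have "merge_rank_right a b j * b \<le> Suc j * (a + b)"
    using merge_rank_right_bounds(2)[OF assms, where a=a and j=j] by simp
  also have "\<dots> < merge_rank_right a b (Suc j) * b"
    by (rule merge_rank_right_bounds(1)[OF assms])
  finally show "merge_rank_right a b j < merge_rank_right a b (Suc j)"
    by simp
qed

lemma merge_rank_left_neq_right:
  assumes "0 < a" "0 < b"
  shows "merge_rank_left a b i \<noteq> merge_rank_right a b j"
proof
  let ?N = "a + b"
  assume "merge_rank_left a b i = merge_rank_right a b j"
  then have "(i + j) * ?N < merge_rank_left a b i * ?N"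
    and "merge_rank_left a b i * ?N < (i + j + 1) * ?N"
    using merge_rank_left_bounds[OF assms(1), where b=b and i=i]
      merge_rank_right_bounds[OF assms(2), where a=a and j=j]
    by (simp_all add: algebra_simps)
  then have "i + j < merge_rank_left a b i" and "merge_rank_left a b i < i + j + 1"
    using mult_less_cancel2 by blast+
  then show False
    by linarith
qed

lemma merge_rank_left_less:
  assumes "i < a"
  shows "merge_rank_left a b i < a + b"
proof -
  have "i * (a + b) + a \<le> a * (a + b)"
    using assms mult_le_mono1[of "Suc i" a "a + b"] by simp
  then have "merge_rank_left a b i * a < a * (a + b)"
    using merge_rank_left_bounds(2)[where a=a and b=b and i=i] assms by linarith
  then show ?thesis
    by (simp add: mult.commute)
qed

lemma merge_rank_right_less:
  assumes "0 < a" "j < b"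
  shows "merge_rank_right a b j < a + b"
proof -
  have "j * (a + b) + b < b * (a + b)"
    using assms mult_le_mono1[of "Suc j" b "a + b"] by simp
  then have "merge_rank_right a b j * b < b * (a + b)"
    using merge_rank_right_bounds(2)[where a=a and b=b and j=j] assms by linarith
  then show ?thesis
    by (simp add: mult.commute)
qed

lemma merge_ranks_partition:
  assumes "0 < a" "0 < b"
  shows "merge_rank_left a b ` {..<a} \<union> merge_rank_right a b ` {..<b} = {..<a + b}"
proof (rule card_subset_eq)
  show "merge_rank_left a b ` {..<a} \<union> merge_rank_right a b ` {..<b} \<subseteq> {..<a + b}"
    using merge_rank_left_less merge_rank_right_less[OF assms(1)] by blast
  have "merge_rank_left a b ` {..<a} \<inter> merge_rank_right a b ` {..<b} = {}"
    using merge_rank_left_neq_right[OF assms] by blast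
  then show "card (merge_rank_left a b ` {..<a} \<union> merge_rank_right a b ` {..<b}) = card {..<a + b}"
    using strict_mono_merge_rank_left[OF assms(1)] strict_mono_merge_rank_right[OF assms(2)]
    by (simp add: card_Un_disjoint card_image strict_mono_imp_inj_on)
qed simp

lemma grid_le_merge_rank_left:
  assumes "0 < a"
  shows "real i / real a \<le> real (merge_rank_left a b i) / real (a + b)"
proof -
  have "real i * real (a + b) \<le> real (merge_rank_left a b i) * real a"
    using merge_rank_left_bounds(1)[OF assms, where b=b and i=i]
    unfolding of_nat_mult[symmetric] of_nat_le_iff .
  then show ?thesis
    using assms by (simp add: divide_simps)
qed

lemma grid_le_merge_rank_right:
  assumes "0 < b"
  shows "real j / real b \<le> real (merge_rank_right a b j) / real (a + b)"
proof -
  have "real j * real (a + b) \<le> real (merge_rank_right a b j) * real b"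
    using merge_rank_right_bounds(1)[OF assms, where a=a and j=j]
    unfolding of_nat_mult[symmetric] of_nat_le_iff by simp
  then show ?thesis
    using assms by (simp add: divide_simps)
qed

lemma grid_sum_add_le:
  assumes "antimono_on {0..<1} h"
  shows "grid_sum h (a + b) \<le> grid_sum h a + grid_sum h b"
proof (cases "a = 0 \<or> b = 0")
  case True
  then show ?thesis
    by (auto simp: grid_sum_def)
next
  case False
  then have "0 < a" "0 < b"
    by simp_all
  define p where "p = merge_rank_left a b"
  define q where "q = merge_rank_right a b"
  have partition: "p ` {..<a} \<union> q ` {..<b} = {..<a + b}"
    unfolding p_def q_def using merge_ranks_partition[OF \<open>0 < a\<close> \<open>0 < b\<close>] .
  define g where "g l = h (real l / real (a + b))" for l
  have "grid_sum h (a + b) = sum g {..<a + b}"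
    by (simp add: grid_sum_def g_def)
  also have "\<dots> = sum g (p ` {..<a}) + sum g (q ` {..<b})"
    unfolding partition[symmetric] p_def q_def
    using merge_rank_left_neq_right[OF \<open>0 < a\<close> \<open>0 < b\<close>] by (intro sum.union_disjoint) auto
  also have "\<dots> = (\<Sum>i<a. g (p i)) + (\<Sum>j<b. g (q j))"
    unfolding p_def q_def
    using strict_mono_merge_rank_left[OF \<open>0 < a\<close>] strict_mono_merge_rank_right[OF \<open>0 < b\<close>]
    by (simp add: sum.reindex strict_mono_imp_inj_on)
  also have "\<dots> \<le> grid_sum h a + grid_sum h b"
    unfolding grid_sum_def
  proof (intro add_mono sum_mono)
    fix i assume "i \<in> {..<a}"
    moreover have "p i < a + b"
      using partition \<open>i \<in> {..<a}\<close> by blast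
    ultimately show "g (p i) \<le> h (real i / real a)"
      unfolding g_def p_def using grid_le_merge_rank_left[OF \<open>0 < a\<close>, where b=b and i=i]
      by (intro monotone_onD[OF assms]) simp_all
  next
    fix j assume "j \<in> {..<b}"
    moreover have "q j < a + b"
      using partition \<open>j \<in> {..<b}\<close> by blast
    ultimately show "g (q j) \<le> h (real j / real b)"
      unfolding g_def q_def using grid_le_merge_rank_right[OF \<open>0 < b\<close>, where a=a and j=j]
      by (intro monotone_onD[OF assms]) simp_all
  qed
  finally show ?thesis .
qed

lemma grid_sum_sum_le:
  assumes "antimono_on {0..<1} h" and "finite K"
  shows "grid_sum h (\<Sum>k\<in>K. n k) \<le> (\<Sum>k\<in>K. grid_sum h (n k))"
  using assms(2)
proof induction
  case empty
  then show ?case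
    by (simp add: grid_sum_def)
next
  case (insert k K)
  then show ?case
    using grid_sum_add_le[OF assms(1), of "n k" "\<Sum>k\<in>K. n k"] by simp
qed

lemma grid_sum_linear:
  assumes "0 < N"
  shows "grid_sum (\<lambda>x. c * x) N = c * (real N - 1) / 2"
proof -
  have "grid_sum (\<lambda>x. c * x) N = c / real N * (\<Sum>i<N. real i)"
    by (simp add: grid_sum_def sum_distrib_left)
  also have "(\<Sum>i<N. real i) = real N * (real N - 1) / 2"
    by (induction N) (simp_all add: field_simps)
  finally show ?thesis
    using assms by simp
qed

lemma antimono_on_ln_one_minus_plus: "antimono_on {0..<1} (\<lambda>x::real. ln (1 - x) + x)"
proof (rule monotone_onI)
  fix u v :: real
  assume "u \<in> {0..<1}" "v \<in> {0..<1}" "u \<le> v"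
  then have "0 < 1 - v" "0 < 1 - u" "1 - u \<le> 1"
    by auto
  have "ln (1 - v) - ln (1 - u) = ln ((1 - v) / (1 - u))"
    using \<open>0 < 1 - v\<close> \<open>0 < 1 - u\<close> by (simp add: ln_div)
  also have "\<dots> \<le> (1 - v) / (1 - u) - 1"
    using \<open>0 < 1 - v\<close> \<open>0 < 1 - u\<close> by (intro ln_le_minus_one) simp
  also have "\<dots> = - ((v - u) / (1 - u))"
    using \<open>0 < 1 - u\<close> by (simp add: field_simps)
  also have "\<dots> \<le> - (v - u)"
  proof -
    have "(v - u) * (1 - u) \<le> v - u"
      using \<open>u \<le> v\<close> \<open>1 - u \<le> 1\<close> by (intro mult_left_le) simp_all
    then have "v - u \<le> (v - u) / (1 - u)"
      using \<open>0 < 1 - u\<close> by (simp add: le_divide_eq)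
    then show ?thesis
      by linarith
  qed
  finally show "ln (1 - v) + v \<le> ln (1 - u) + u"
    by simp
qed

lemma antimono_on_ln_one_minus_plus_scaled:
  fixes t :: real
  assumes "0 \<le> t" and "t \<le> 1"
  shows "antimono_on {0..<1} (\<lambda>x. ln (1 - t * x) + t * x)"
proof -
  have "mono_on {0..<1} (\<lambda>x. t * x)"
    using \<open>0 \<le> t\<close> by (auto intro!: monotone_onI mult_left_mono)
  moreover have "(\<lambda>x. t * x) ` {0..<1} \<subseteq> {0..<1}"
  proof safe
    fix x :: real assume "x \<in> {0..<1}"
    then have "t * x \<le> x"
      using assms by (intro mult_left_le_one_le) simp_all
    then show "t * x \<in> {0..<1}"
      using \<open>x \<in> {0..<1}\<close> \<open>0 \<le> t\<close> by simp
  qed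
  ultimately show ?thesis
    using monotone_on_o[OF antimono_on_ln_one_minus_plus] by (simp add: comp_def)
qed

theorem lemma7p13:
  fixes n m :: nat and nk :: "nat \<Rightarrow> nat" and t :: real
  assumes "1 \<le> m" and "m \<le> n"
    and "\<And>k. k \<in> {1..m} \<Longrightarrow> nk k > 0"
    and "(\<Sum>k=1..m. nk k) = n"
    and "0 \<le> t" and "t \<le> 1"
  shows "(\<Sum>k=1..m. \<Sum>i<nk k. ln (1 - t * real i / real (nk k)))
           - (\<Sum>i<n. ln (1 - t * real i / real n))
         \<ge> (real m - 1) / 2 * t"
proof -
  define h where "h x = ln (1 - t * x) + t * x" for x
  define L where "L N = (\<Sum>i<N. ln (1 - t * real i / real N))" for N
  have grid_h: "grid_sum h N = L N + t * (real N - 1) / 2" if "0 < N" for N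
    using grid_sum_linear[OF that, of t] by (simp add: h_def L_def grid_sum_def sum.distrib)
  have "antimono_on {0..<1} h"
    unfolding h_def using assms(5,6) by (rule antimono_on_ln_one_minus_plus_scaled)
  then have "grid_sum h n \<le> (\<Sum>k=1..m. grid_sum h (nk k))"
    using grid_sum_sum_le[of h "{1..m}" nk] assms(4) by simp
  moreover have "0 < n"
    using assms(1,2) by simp
  ultimately have "L n + t * (real n - 1) / 2 \<le> (\<Sum>k=1..m. L (nk k) + t * (real (nk k) - 1) / 2)"
    using grid_h assms(3) by simp
  also have "\<dots> = (\<Sum>k=1..m. L (nk k)) + t * (real n - real m) / 2"
    using assms(4)
    by (simp add: sum.distrib sum_subtractf flip: sum_divide_distrib sum_distrib_left of_nat_sum)
  finally show ?thesis
    by (simp add: L_def field_simps)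
qed

end
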